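(* Let $\mathcal{X}$ be a finite set with $|\mathcal{X}|=n$, and let $s,t\ge 0$ be integers with $s+t\le n$. Generate random subsets $\mathcal{T},\mathcal{S}\subseteq\mathcal{X}$ as follows: (0) draw $\mathcal{L}\subseteq\mathcal{X}$ of size $t+s$ uniformly at random without replacement; (1) draw $\mathcal{T}\subseteq\mathcal{L}$ of size $t$ uniformly at random without replacement from $\mathcal{L}$; (2) draw an integer $i$ from the hypergeometric distribution with population size $n$, $t$ success states and $s$ draws, i.e. $\Pr\{i\}=\binom{t}{i}\binom{n-t}{s-i}/\binom{n}{s}$; (3) draw $i$ elements uniformly at random without replacement from $\mathcal{T}$; (4) draw $s-i$ elements uniformly at random without replacement from $\mathcal{L}\setminus\mathcal{T}$; (5) let $\mathcal{S}$ be the union of the elements drawn in steps (3) and (4). Then $\Pr\{\mathcal{T}=T\}=1/\binom{n}{t}$ for every $t$-subset $T\subseteq\mathcal{X}$, and $\Pr\{\mathcal{S}=S\mid\mathcal{T}=T\}=1/\binom{n}{s}$ for every $s$-subset $S$ and $t$-subset $T$ of $\mathcal{X}$; that is, $(\mathcal{T},\mathcal{S})$ has the same joint distribution as a pair of independent samples of sizes $t$ and $s$, each drawn uniformly at random without replacement from $\mathcal{X}$. *)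

theory Defs
  imports "HOL-Probability.Probability"
begin

definition uniform_subset :: "nat \<Rightarrow> 'a set \<Rightarrow> 'a set pmf" where
  "uniform_subset k A = pmf_of_set {B. B \<subseteq> A \<and> card B = k}"

definition hypergeometric_pmf :: "nat \<Rightarrow> nat \<Rightarrow> nat \<Rightarrow> nat pmf" where
  "hypergeometric_pmf N K m = embed_pmf (\<lambda>i. if i \<le> m then
      real (K choose i) * real ((N - K) choose (m - i)) / real (N choose m) else 0)"

definition sample_TS :: "'a set \<Rightarrow> nat \<Rightarrow> nat \<Rightarrow> ('a set \<times> 'a set) pmf" where
  "sample_TS X t s = do {
     L \<leftarrow> uniform_subset (t + s) X;
     T \<leftarrow> uniform_subset t L;
     i \<leftarrow> hypergeometric_pmf (card X) t s;
     A \<leftarrow> uniform_subset i T;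
     B \<leftarrow> uniform_subset (s - i) (L - T);
     return_pmf (T, A \<union> B) }"

end

theory Submission
  imports Defs
begin

(* Choosing L and then T \<subseteq> L uniformly is the same as choosing T uniformly and then L - T
   uniformly from X - T: both give the uniform distribution on the admissible pairs. Given T, a
   uniform (s - i)-subset of a uniform s-subset of X - T is a uniform (s - i)-subset of X - T.
   Finally, a uniform s-subset S of X is obtained by drawing the hypergeometric size i of S \<inter> T
   and then, independently, uniform subsets S \<inter> T of T and S - T of X - T of sizes i and s - i. *)

abbreviation subsets_of_size :: "nat \<Rightarrow> 'a set \<Rightarrow> 'a set set" where
  "subsets_of_size k A \<equiv> {B. B \<subseteq> A \<and> card B = k}"

lemma finite_subsets_of_size: "finite A \<Longrightarrow> finite (subsets_of_size k A)"
  by (rule finite_subset[of _ "Pow A"]) auto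

lemma ex_subset_of_card: "k \<le> card A \<Longrightarrow> \<exists>B\<subseteq>A. card B = k"
  by (metis obtain_subset_with_card_n)

lemma set_pmf_uniform_subset:
  "finite A \<Longrightarrow> k \<le> card A \<Longrightarrow> set_pmf (uniform_subset k A) = subsets_of_size k A"
  unfolding uniform_subset_def
  by (subst set_pmf_of_set) (auto simp: finite_subsets_of_size ex_subset_of_card)

lemma pmf_uniform_subset:
  assumes "finite A" "B \<subseteq> A" "card B = k"
  shows "pmf (uniform_subset k A) B = 1 / real (card A choose k)"
proof -
  have "k \<le> card A" using assms card_mono by blast
  then show ?thesis
    unfolding uniform_subset_def using assms
    by (subst pmf_of_set) (auto simp: finite_subsets_of_size ex_subset_of_card n_subsets)
qed

lemma bind_pmf_of_set_Sigma:
  assumes "finite A" "A \<noteq> {}"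
    and "\<And>x. x \<in> A \<Longrightarrow> finite (B x) \<and> B x \<noteq> {} \<and> card (B x) = c"
  shows "pmf_of_set A \<bind> (\<lambda>x. map_pmf (Pair x) (pmf_of_set (B x))) = pmf_of_set (Sigma A B)"
proof -
  have "pmf_of_set A \<bind> (\<lambda>x. map_pmf (Pair x) (pmf_of_set (B x)))
      = pmf_of_set A \<bind> (\<lambda>x. pmf_of_set (Pair x ` B x))"
    using assms by (intro bind_pmf_cong refl) (auto intro: map_pmf_of_set_inj simp: inj_on_def)
  also have "\<dots> = pmf_of_set (\<Union>x\<in>A. Pair x ` B x)"
    using assms by (intro pmf_of_set_UN[where n = c, symmetric])
      (auto simp: card_image inj_on_def disjoint_family_on_def)
  also have "(\<Union>x\<in>A. Pair x ` B x) = Sigma A B"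
    by auto
  finally show ?thesis .
qed

lemma pmf_of_set_eq_bind_fibres:
  assumes "finite A" "A \<noteq> {}"
  shows "pmf_of_set A = map_pmf f (pmf_of_set A) \<bind> (\<lambda>i. pmf_of_set {y \<in> A. f y = i})"
proof (rule pmf_eqI)
  fix x
  define F where "F y = {z \<in> A. f z = f y}" for y
  have F: "finite (F y)" "y \<in> A \<Longrightarrow> F y \<noteq> {}" for y
    using assms by (auto simp: F_def)
  have "pmf (map_pmf f (pmf_of_set A) \<bind> (\<lambda>i. pmf_of_set {y \<in> A. f y = i})) x
      = (\<Sum>y\<in>A. indicator (F y) x / card (F y)) / card A"
    using assms F by (simp add: pmf_bind integral_pmf_of_set F_def[symmetric])
  also have "(\<Sum>y\<in>A. indicator (F y) x / card (F y)) = indicator A x"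
  proof (cases "x \<in> A")
    case True
    then have "(\<Sum>y\<in>A. indicator (F y) x / card (F y)) = (\<Sum>y\<in>F x. 1 / card (F x))"
      by (intro sum.mono_neutral_cong_right) (auto simp: F_def assms indicator_def split: if_splits)
    then show ?thesis
      using True F by simp
  qed (auto simp: F_def)
  finally show "pmf (pmf_of_set A) x = pmf (map_pmf f (pmf_of_set A) \<bind> (\<lambda>i. pmf_of_set {y \<in> A. f y = i})) x"
    using assms by simp
qed

lemma bij_betw_subset_complement_pairs:
  assumes "finite X"
  shows "bij_betw (\<lambda>(T, R). (T \<union> R, T))
           (SIGMA T:subsets_of_size k X. subsets_of_size l (X - T))
           (SIGMA L:subsets_of_size (k + l) X. subsets_of_size k L)"
proof (rule bij_betwI[where g = "\<lambda>(L, T). (T, L - T)"])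
  have "card (T \<union> R) = k + l" if "T \<subseteq> X" "card T = k" "R \<subseteq> X - T" "card R = l" for T R
    using that assms by (subst card_Un_disjoint) (auto intro: finite_subset)
  then show "(\<lambda>(T, R). (T \<union> R, T)) \<in> (SIGMA T:subsets_of_size k X. subsets_of_size l (X - T))
      \<rightarrow> (SIGMA L:subsets_of_size (k + l) X. subsets_of_size k L)"
    by auto
  have "card (L - T) = l" if "L \<subseteq> X" "card L = k + l" "T \<subseteq> L" "card T = k" for L T
    using that assms by (subst card_Diff_subset) (auto intro: finite_subset)
  then show "(\<lambda>(L, T). (T, L - T)) \<in> (SIGMA L:subsets_of_size (k + l) X. subsets_of_size k L)
      \<rightarrow> (SIGMA T:subsets_of_size k X. subsets_of_size l (X - T))"
    by auto
qed auto

lemma uniform_subset_nested_eq_complement: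
  assumes "finite X" "k + l \<le> card X"
  shows "uniform_subset (k + l) X \<bind> (\<lambda>L. map_pmf (Pair L) (uniform_subset k L))
       = uniform_subset k X \<bind> (\<lambda>T. map_pmf (\<lambda>R. (T \<union> R, T)) (uniform_subset l (X - T)))"
proof -
  have card_Diff: "card (X - T) = card X - k" if "T \<in> subsets_of_size k X" for T
    using that finite_subset[OF _ assms(1)] by (simp add: card_Diff_subset)
  have "(SIGMA T:subsets_of_size k X. subsets_of_size l (X - T)) \<noteq> {}"
  proof -
    obtain T where T: "T \<in> subsets_of_size k X"
      using assms ex_subset_of_card[of k X] by auto
    have "l \<le> card (X - T)"
      using assms card_Diff[OF T] by simp
    then obtain R where "R \<subseteq> X - T" "card R = l"
      using ex_subset_of_card by blast
    then show ?thesis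
      using T by blast
  qed
  have "uniform_subset (k + l) X \<bind> (\<lambda>L. map_pmf (Pair L) (uniform_subset k L))
      = pmf_of_set (SIGMA L:subsets_of_size (k + l) X. subsets_of_size k L)"
    unfolding uniform_subset_def using assms
    by (intro bind_pmf_of_set_Sigma[where c = "(k + l) choose k"])
       (auto simp: finite_subsets_of_size ex_subset_of_card n_subsets dest: finite_subset[OF _ assms(1)])
  also have "\<dots> = map_pmf (\<lambda>(T, R). (T \<union> R, T))
                   (pmf_of_set (SIGMA T:subsets_of_size k X. subsets_of_size l (X - T)))"
    using assms \<open>(SIGMA T:subsets_of_size k X. subsets_of_size l (X - T)) \<noteq> {}\<close>
    by (intro map_pmf_of_set_bij_betw[symmetric] bij_betw_subset_complement_pairs)
       (auto simp: finite_subsets_of_size)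
  also have "pmf_of_set (SIGMA T:subsets_of_size k X. subsets_of_size l (X - T))
      = uniform_subset k X \<bind> (\<lambda>T. map_pmf (Pair T) (uniform_subset l (X - T)))"
    unfolding uniform_subset_def using assms card_Diff
    by (intro bind_pmf_of_set_Sigma[where c = "(card X - k) choose l", symmetric])
       (auto simp: finite_subsets_of_size ex_subset_of_card n_subsets)
  finally show ?thesis
    by (simp add: map_bind_pmf pmf.map_comp o_def)
qed

lemma bind_uniform_subset:
  assumes "finite X" "k \<le> m" "m \<le> card X"
  shows "uniform_subset m X \<bind> uniform_subset k = uniform_subset k X"
proof -
  have "map_pmf snd (uniform_subset (k + (m - k)) X \<bind> (\<lambda>L. map_pmf (Pair L) (uniform_subset k L)))
      = map_pmf snd (uniform_subset k X \<bind> (\<lambda>T. map_pmf (\<lambda>R. (T \<union> R, T)) (uniform_subset (m - k) (X - T))))"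
    using assms by (subst uniform_subset_nested_eq_complement) auto
  then show ?thesis
    using assms by (simp add: map_bind_pmf pmf.map_comp o_def bind_return_pmf')
qed

lemma bij_betw_Un_subsets_by_intersection:
  assumes "finite X" "T \<subseteq> X" "i \<le> s"
  shows "bij_betw (\<lambda>(A, B). A \<union> B) (subsets_of_size i T \<times> subsets_of_size (s - i) (X - T))
           {S \<in> subsets_of_size s X. card (S \<inter> T) = i}"
proof (rule bij_betwI[where g = "\<lambda>S. (S \<inter> T, S - T)"])
  have "card (A \<union> B) = s \<and> (A \<union> B) \<inter> T = A"
    if "A \<subseteq> T" "card A = i" "B \<subseteq> X - T" "card B = s - i" for A B
    using that assms by (subst card_Un_disjoint) (auto intro: finite_subset)
  then show "(\<lambda>(A, B). A \<union> B) \<in> subsets_of_size i T \<times> subsets_of_size (s - i) (X - T)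
      \<rightarrow> {S \<in> subsets_of_size s X. card (S \<inter> T) = i}"
    using assms by auto
  have "card (S - T) = s - i" if "S \<subseteq> X" "card S = s" "card (S \<inter> T) = i" for S
    using that card_Int_Diff[of S T] finite_subset[OF _ assms(1)] by simp
  then show "(\<lambda>S. (S \<inter> T, S - T)) \<in> {S \<in> subsets_of_size s X. card (S \<inter> T) = i}
      \<rightarrow> subsets_of_size i T \<times> subsets_of_size (s - i) (X - T)"
    by auto
qed auto

lemma card_subsets_of_size_Int:
  assumes "finite X" "T \<subseteq> X" "i \<le> s"
  shows "card {S \<in> subsets_of_size s X. card (S \<inter> T) = i}
       = (card T choose i) * ((card X - card T) choose (s - i))"
  using bij_betw_same_card[OF bij_betw_Un_subsets_by_intersection[OF assms]] assms
  by (simp add: card_cartesian_product n_subsets card_Diff_subset finite_subset)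

(* embed_pmf returns junk unless its argument is a probability mass function. Recognising the
   hypergeometric weights as the pmf of the left-hand side shows at once that they form one and
   that the identity holds, without Vandermonde's convolution. *)
lemma map_pmf_card_Int_uniform_subset:
  assumes "finite X" "T \<subseteq> X" "s \<le> card X"
  shows "map_pmf (\<lambda>S. card (S \<inter> T)) (uniform_subset s X) = hypergeometric_pmf (card X) (card T) s"
proof -
  let ?p = "map_pmf (\<lambda>S. card (S \<inter> T)) (uniform_subset s X)"
  have "pmf ?p = (\<lambda>i. if i \<le> s then real (card T choose i) * real ((card X - card T) choose (s - i))
                      / real (card X choose s) else 0)"
  proof
    fix i
    have pmf_p: "pmf ?p i = card {S \<in> subsets_of_size s X. card (S \<inter> T) = i} / (card X choose s)"
      unfolding pmf_map uniform_subset_def using assms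
      by (subst measure_pmf_of_set) (auto simp: finite_subsets_of_size ex_subset_of_card Int_def n_subsets)
    show "pmf ?p i = (if i \<le> s then real (card T choose i)
        * real ((card X - card T) choose (s - i)) / real (card X choose s) else 0)"
    proof (cases "i \<le> s")
      case True
      then show ?thesis
        unfolding pmf_p card_subsets_of_size_Int[OF assms(1,2) True] by simp
    next
      case False
      have "card (S \<inter> T) \<le> s" if "S \<in> subsets_of_size s X" for S
        using that card_mono[of S "S \<inter> T"] finite_subset[OF _ assms(1)] by auto
      then have no_such_S: "{S \<in> subsets_of_size s X. card (S \<inter> T) = i} = {}"
        using False by fastforce
      show ?thesis
        unfolding pmf_p no_such_S using False by simp
    qed
  qed
  then have "hypergeometric_pmf (card X) (card T) s = embed_pmf (pmf ?p)"
    by (simp only: hypergeometric_pmf_def)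
  then show ?thesis
    by (simp add: type_definition.Rep_inverse[OF td_pmf_embed_pmf])
qed

lemma pmf_of_set_subsets_of_size_Int:
  assumes "finite X" "T \<subseteq> X" "i \<le> s" "i \<le> card T" "s - i \<le> card X - card T"
  shows "pmf_of_set {S \<in> subsets_of_size s X. card (S \<inter> T) = i}
       = uniform_subset i T \<bind> (\<lambda>A. map_pmf ((\<union>) A) (uniform_subset (s - i) (X - T)))"
proof -
  have fin: "finite T" "finite (X - T)"
    using assms finite_subset by auto
  have card_Diff: "card (X - T) = card X - card T"
    using assms fin by (simp add: card_Diff_subset)
  have ne: "subsets_of_size i T \<noteq> {}" "subsets_of_size (s - i) (X - T) \<noteq> {}"
    using assms card_Diff ex_subset_of_card[of i T] ex_subset_of_card[of "s - i" "X - T"] by auto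
  have "pmf_of_set {S \<in> subsets_of_size s X. card (S \<inter> T) = i}
      = map_pmf (\<lambda>(A, B). A \<union> B) (pmf_of_set (subsets_of_size i T \<times> subsets_of_size (s - i) (X - T)))"
    using assms ne fin
    by (intro map_pmf_of_set_bij_betw[symmetric] bij_betw_Un_subsets_by_intersection)
       (auto simp: finite_subsets_of_size)
  also have "pmf_of_set (subsets_of_size i T \<times> subsets_of_size (s - i) (X - T))
      = uniform_subset i T \<bind> (\<lambda>A. map_pmf (Pair A) (uniform_subset (s - i) (X - T)))"
    unfolding uniform_subset_def using ne fin
    by (intro bind_pmf_of_set_Sigma[symmetric]) (auto simp: finite_subsets_of_size)
  finally show ?thesis
    by (simp add: map_bind_pmf pmf.map_comp o_def)
qed

lemma hypergeometric_mixture_uniform_subset: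
  assumes "finite X" "T \<subseteq> X" "s \<le> card X"
  shows "hypergeometric_pmf (card X) (card T) s
           \<bind> (\<lambda>i. uniform_subset i T \<bind> (\<lambda>A. map_pmf ((\<union>) A) (uniform_subset (s - i) (X - T))))
       = uniform_subset s X"
proof -
  let ?f = "\<lambda>S. card (S \<inter> T)"
  have "uniform_subset s X
      = map_pmf ?f (uniform_subset s X) \<bind> (\<lambda>i. pmf_of_set {S \<in> subsets_of_size s X. ?f S = i})"
    unfolding uniform_subset_def using assms
    by (intro pmf_of_set_eq_bind_fibres) (auto simp: finite_subsets_of_size ex_subset_of_card)
  also have "\<dots> = hypergeometric_pmf (card X) (card T) s
      \<bind> (\<lambda>i. uniform_subset i T \<bind> (\<lambda>A. map_pmf ((\<union>) A) (uniform_subset (s - i) (X - T))))"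
    unfolding map_pmf_card_Int_uniform_subset[OF assms]
  proof (rule bind_pmf_cong[OF refl])
    fix i assume "i \<in> set_pmf (hypergeometric_pmf (card X) (card T) s)"
    then obtain S where S: "S \<subseteq> X" "card S = s" "i = card (S \<inter> T)"
      using assms by (auto simp: map_pmf_card_Int_uniform_subset[symmetric] set_pmf_uniform_subset)
    then have "i \<le> card T" "card (S - T) = s - i" "card (S - T) \<le> card (X - T)"
      using assms card_Int_Diff[of S T] finite_subset[OF _ assms(1)]
      by (auto intro: card_mono)
    moreover have "card (X - T) = card X - card T"
      using assms by (simp add: card_Diff_subset finite_subset)
    ultimately show "pmf_of_set {S \<in> subsets_of_size s X. ?f S = i}
        = uniform_subset i T \<bind> (\<lambda>A. map_pmf ((\<union>) A) (uniform_subset (s - i) (X - T)))"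
      using assms S card_mono[OF finite_subset[OF _ assms(1)], of S "S \<inter> T"]
      by (intro pmf_of_set_subsets_of_size_Int) auto
  qed
  finally show ?thesis ..
qed

definition sample_S :: "'a set \<Rightarrow> nat \<Rightarrow> nat \<Rightarrow> 'a set \<Rightarrow> 'a set \<Rightarrow> 'a set pmf" where
  "sample_S X t s L T = do {
     i \<leftarrow> hypergeometric_pmf (card X) t s;
     A \<leftarrow> uniform_subset i T;
     B \<leftarrow> uniform_subset (s - i) (L - T);
     return_pmf (A \<union> B) }"

lemma sample_TS_eq_bind_sample_S:
  "sample_TS X t s
     = uniform_subset (t + s) X \<bind> (\<lambda>L. uniform_subset t L \<bind> (\<lambda>T. map_pmf (Pair T) (sample_S X t s L T)))"
  unfolding sample_TS_def sample_S_def by (simp add: map_bind_pmf)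

lemma bind_sample_S_uniform_complement:
  assumes "finite X" "T \<subseteq> X" "s + card T \<le> card X"
  shows "uniform_subset s (X - T) \<bind> (\<lambda>Q. sample_S X (card T) s (T \<union> Q) T) = uniform_subset s X"
proof -
  let ?H = "hypergeometric_pmf (card X) (card T) s"
  have card_Diff: "card (X - T) = card X - card T"
    using assms by (simp add: card_Diff_subset finite_subset)
  have "uniform_subset s (X - T) \<bind> (\<lambda>Q. sample_S X (card T) s (T \<union> Q) T)
      = uniform_subset s (X - T) \<bind> (\<lambda>Q. ?H \<bind> (\<lambda>i. uniform_subset i T \<bind> (\<lambda>A.
          map_pmf ((\<union>) A) (uniform_subset (s - i) Q))))"
  proof (rule bind_pmf_cong[OF refl])
    fix Q assume "Q \<in> set_pmf (uniform_subset s (X - T))"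
    then have "T \<union> Q - T = Q"
      using assms card_Diff by (auto simp: set_pmf_uniform_subset)
    then show "sample_S X (card T) s (T \<union> Q) T = ?H \<bind> (\<lambda>i. uniform_subset i T \<bind> (\<lambda>A.
          map_pmf ((\<union>) A) (uniform_subset (s - i) Q)))"
      by (simp add: sample_S_def map_pmf_def)
  qed
  also have "\<dots> = ?H \<bind> (\<lambda>i. uniform_subset i T \<bind> (\<lambda>A.
      map_pmf ((\<union>) A) (uniform_subset s (X - T) \<bind> uniform_subset (s - i))))"
    by (simp add: map_bind_pmf bind_commute_pmf[of "uniform_subset s (X - T)"])
  also have "\<dots> = ?H \<bind> (\<lambda>i. uniform_subset i T \<bind> (\<lambda>A.
      map_pmf ((\<union>) A) (uniform_subset (s - i) (X - T))))"
    using assms card_Diff by (simp add: bind_uniform_subset)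
  also have "\<dots> = uniform_subset s X"
    using assms by (simp add: hypergeometric_mixture_uniform_subset)
  finally show ?thesis .
qed

lemma sample_TS_eq_pair_pmf:
  assumes "finite X" "s + t \<le> card X"
  shows "sample_TS X t s = pair_pmf (uniform_subset t X) (uniform_subset s X)"
proof -
  have "sample_TS X t s
      = (uniform_subset (t + s) X \<bind> (\<lambda>L. map_pmf (Pair L) (uniform_subset t L)))
          \<bind> (\<lambda>(L, T). map_pmf (Pair T) (sample_S X t s L T))"
    by (simp add: sample_TS_eq_bind_sample_S bind_assoc_pmf bind_map_pmf)
  also have "\<dots> = uniform_subset t X
      \<bind> (\<lambda>T. map_pmf (Pair T) (uniform_subset s (X - T) \<bind> (\<lambda>Q. sample_S X t s (T \<union> Q) T)))"
    using assms
    by (simp add: uniform_subset_nested_eq_complement bind_assoc_pmf bind_map_pmf map_bind_pmf)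
  also have "\<dots> = uniform_subset t X \<bind> (\<lambda>T. map_pmf (Pair T) (uniform_subset s X))"
  proof (rule bind_pmf_cong[OF refl])
    fix T assume "T \<in> set_pmf (uniform_subset t X)"
    then have "T \<subseteq> X" "card T = t"
      using assms by (auto simp: set_pmf_uniform_subset)
    then show "map_pmf (Pair T) (uniform_subset s (X - T) \<bind> (\<lambda>Q. sample_S X t s (T \<union> Q) T))
        = map_pmf (Pair T) (uniform_subset s X)"
      using assms bind_sample_S_uniform_complement[of X T s] by simp
  qed
  also have "\<dots> = pair_pmf (uniform_subset t X) (uniform_subset s X)"
    by (simp add: pair_pmf_def map_pmf_def)
  finally show ?thesis .
qed

theorem mainTheorem8:
  fixes X :: "'a set" and n s t :: nat
  assumes "finite X" and "card X = n" and "s + t \<le> n"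
  shows "(\<forall>T. T \<subseteq> X \<and> card T = t \<longrightarrow>
            measure_pmf.prob (sample_TS X t s) {p. fst p = T} = 1 / real (n choose t))
       \<and> (\<forall>T S. T \<subseteq> X \<and> card T = t \<and> S \<subseteq> X \<and> card S = s \<longrightarrow>
            measure_pmf.prob (sample_TS X t s) {(T, S)}
              / measure_pmf.prob (sample_TS X t s) {p. fst p = T} = 1 / real (n choose s))
       \<and> sample_TS X t s = pair_pmf (uniform_subset t X) (uniform_subset s X)"
proof -
  have joint: "sample_TS X t s = pair_pmf (uniform_subset t X) (uniform_subset s X)"
    using assms by (intro sample_TS_eq_pair_pmf) auto
  have marginal: "measure_pmf.prob (sample_TS X t s) {p. fst p = T} = pmf (uniform_subset t X) T" for T
  proof -
    have "measure_pmf.prob (sample_TS X t s) {p. fst p = T}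
        = measure_pmf.prob (map_pmf fst (sample_TS X t s)) {T}"
      by (simp add: vimage_def)
    then show ?thesis
      by (simp add: joint map_fst_pair_pmf measure_pmf_single)
  qed
  have "0 < n choose t"
    using assms by simp
  then show ?thesis
    using assms joint marginal
    by (simp add: measure_pmf_single pmf_pair pmf_uniform_subset)
qed

end
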